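(* Let $Y$ be the colimit of a sequence $Y_1\subset Y_2\subset\cdots$ of spaces. Assume that each $Y_n$ is paracompact and closed in $Y$, that each $Y_n\subset Y_{n+1}$ is a neighbourhood retract, and that each $Y_{n+1}\setminus Y_n$ is paracompact and Hausdorff. Then $Y$ is paracompact.
   Context: A space is called paracompact if every open cover admits a subordinate locally finite partition of unity. *)

theory Defs
  imports "HOL-Analysis.Analysis"
begin

text \<open>A (locally finite) partition of unity on X, given as a set of real-valued
functions (an indexed family with repetitions can always be collapsed by summing).\<close>
definition locally_finite_partition_of_unity :: "'a topology \<Rightarrow> ('a \<Rightarrow> real) set \<Rightarrow> bool" where
  "locally_finite_partition_of_unity X F \<longleftrightarrow>
     (\<forall>f\<in>F. continuous_map X euclideanreal f \<and> (\<forall>x\<in>topspace X. 0 \<le> f x)) \<and>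
     (\<forall>x\<in>topspace X. \<exists>V. openin X V \<and> x \<in> V \<and>
          finite {f\<in>F. \<exists>y\<in>V. f y \<noteq> 0}) \<and>
     (\<forall>x\<in>topspace X. (\<Sum>f\<in>{f\<in>F. f x \<noteq> 0}. f x) = 1)"

definition subordinate_to :: "'a topology \<Rightarrow> ('a \<Rightarrow> real) set \<Rightarrow> 'a set set \<Rightarrow> bool" where
  "subordinate_to X F \<U> \<longleftrightarrow>
     (\<forall>f\<in>F. \<exists>U\<in>\<U>. X closure_of {x\<in>topspace X. f x \<noteq> 0} \<subseteq> U)"

definition paracompact_space :: "'a topology \<Rightarrow> bool" where
  "paracompact_space X \<longleftrightarrow>
     (\<forall>\<U>. (\<forall>U\<in>\<U>. openin X U) \<and> \<Union>\<U> = topspace X \<longrightarrow>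
        (\<exists>F. locally_finite_partition_of_unity X F \<and> subordinate_to X F \<U>))"

definition neighbourhood_retract :: "'a set \<Rightarrow> 'a topology \<Rightarrow> bool" where
  "neighbourhood_retract S X \<longleftrightarrow>
     (\<exists>U. openin X U \<and> S \<subseteq> U \<and> S retract_of_space (subtopology X U))"

definition is_sequential_colimit :: "'a topology \<Rightarrow> (nat \<Rightarrow> 'a set) \<Rightarrow> bool" where
  "is_sequential_colimit Y S \<longleftrightarrow>
     (\<forall>n. S n \<subseteq> S (Suc n)) \<and> topspace Y = (\<Union>n. S n) \<and>
     (\<forall>U. U \<subseteq> topspace Y \<and> (\<forall>n. openin (subtopology Y (S n)) (U \<inter> S n)) \<longrightarrow> openin Y U)"

end

theory Submission
  imports Defs
begin

text \<open>Fix an open cover of Y. Its traces cover every S n, and a subordinate partition of unity on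
  S n extends to one on S (Suc n): pull it back along a retraction r of a neighbourhood W of S n,
  damp it by a cutoff function that is 1 on S n and supported in W (shrunk so that r respects the
  supports), and fill up the missing mass with any subordinate partition of S (Suc n). The resulting
  compatible partitions glue to continuous functions on the colimit Y, forming a partition of unity
  that is only point-finite there; Dold's construction (discard everything below half the pointwise
  maximum and renormalise) makes it locally finite.\<close>

section \<open>Locally finite families and indexed partitions of unity\<close>

lemma continuous_map_locally:
  assumes "\<And>x. x \<in> topspace X \<Longrightarrow> \<exists>V. openin X V \<and> x \<in> V \<and> continuous_map (subtopology X V) Y f"
  shows "continuous_map X Y f"
  by (rule pasting_lemma[where I="{V. openin X V \<and> continuous_map (subtopology X V) Y f}"
        and T=id and f="\<lambda>_. f"]) (use assms in auto)

definition locally_finite_family :: "'a topology \<Rightarrow> 'j set \<Rightarrow> ('j \<Rightarrow> 'a \<Rightarrow> real) \<Rightarrow> bool" where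
  "locally_finite_family X J f \<longleftrightarrow>
     (\<forall>x\<in>topspace X. \<exists>V. openin X V \<and> x \<in> V \<and> finite {j\<in>J. \<exists>y\<in>V. f j y \<noteq> 0})"

definition point_finite_partition_of_unity :: "'a topology \<Rightarrow> 'j set \<Rightarrow> ('j \<Rightarrow> 'a \<Rightarrow> real) \<Rightarrow> bool" where
  "point_finite_partition_of_unity X J f \<longleftrightarrow>
     (\<forall>j\<in>J. continuous_map X euclideanreal (f j) \<and> (\<forall>x\<in>topspace X. 0 \<le> f j x)) \<and>
     (\<forall>x\<in>topspace X. finite {j\<in>J. f j x \<noteq> 0} \<and> (\<Sum>j\<in>{j\<in>J. f j x \<noteq> 0}. f j x) = 1)"

definition indexed_partition_of_unity :: "'a topology \<Rightarrow> 'j set \<Rightarrow> ('j \<Rightarrow> 'a \<Rightarrow> real) \<Rightarrow> bool" where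
  "indexed_partition_of_unity X J f \<longleftrightarrow>
     point_finite_partition_of_unity X J f \<and> locally_finite_family X J f"

definition subordinate_family :: "'a topology \<Rightarrow> 'j set \<Rightarrow> ('j \<Rightarrow> 'a \<Rightarrow> real) \<Rightarrow> ('j \<Rightarrow> 'a set) \<Rightarrow> bool" where
  "subordinate_family X J f U \<longleftrightarrow> (\<forall>j\<in>J. X closure_of {x\<in>topspace X. f j x \<noteq> 0} \<subseteq> U j)"

lemma locally_finite_family_imp_finite:
  assumes "locally_finite_family X J f" "x \<in> topspace X"
  shows "finite {j\<in>J. f j x \<noteq> 0}"
proof -
  obtain V where "x \<in> V" and fin: "finite {j\<in>J. \<exists>y\<in>V. f j y \<noteq> 0}"
    using assms unfolding locally_finite_family_def by blast
  have "{j\<in>J. f j x \<noteq> 0} \<subseteq> {j\<in>J. \<exists>y\<in>V. f j y \<noteq> 0}"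
    using \<open>x \<in> V\<close> by blast
  then show ?thesis using fin by (rule finite_subset)
qed

lemma locally_finite_family_mono:
  assumes "locally_finite_family X J f"
    and "\<And>j x. j \<in> K \<Longrightarrow> x \<in> topspace X \<Longrightarrow> g j x \<noteq> 0 \<Longrightarrow> j \<in> J \<and> f j x \<noteq> 0"
  shows "locally_finite_family X K g"
  unfolding locally_finite_family_def
proof
  fix x assume "x \<in> topspace X"
  then obtain V where V: "openin X V" "x \<in> V" "finite {j\<in>J. \<exists>y\<in>V. f j y \<noteq> 0}"
    using assms(1) unfolding locally_finite_family_def by blast
  have "{j\<in>K. \<exists>y\<in>V. g j y \<noteq> 0} \<subseteq> {j\<in>J. \<exists>y\<in>V. f j y \<noteq> 0}"
    using assms(2) openin_subset[OF V(1)] by blast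
  then show "\<exists>V. openin X V \<and> x \<in> V \<and> finite {j\<in>K. \<exists>y\<in>V. g j y \<noteq> 0}"
    using V finite_subset by blast
qed

lemma sum_nonzero_eq_sum_superset:
  assumes "finite D" "{j\<in>J. f j \<noteq> 0} \<subseteq> D" "D \<subseteq> J"
  shows "(\<Sum>j\<in>{j\<in>J. f j \<noteq> 0}. f j) = (\<Sum>j\<in>D. f j)"
  by (rule sum.mono_neutral_left) (use assms in auto)

lemma continuous_map_locally_finite_sum:
  assumes "\<And>j. j \<in> J \<Longrightarrow> continuous_map X euclideanreal (f j)"
    and "locally_finite_family X J f"
  shows "continuous_map X euclideanreal (\<lambda>x. \<Sum>j\<in>{j\<in>J. f j x \<noteq> 0}. f j x)"
proof (rule continuous_map_locally)
  fix x assume "x \<in> topspace X"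
  then obtain V where V: "openin X V" "x \<in> V" and fin: "finite {j\<in>J. \<exists>y\<in>V. f j y \<noteq> 0}"
    using assms(2) unfolding locally_finite_family_def by blast
  let ?G = "{j\<in>J. \<exists>y\<in>V. f j y \<noteq> 0}"
  have "continuous_map (subtopology X V) euclideanreal (\<lambda>y. \<Sum>j\<in>?G. f j y)"
    by (intro continuous_map_from_subtopology continuous_map_sum) (use assms(1) fin in auto)
  moreover have "(\<Sum>j\<in>?G. f j y) = (\<Sum>j\<in>{j\<in>J. f j y \<noteq> 0}. f j y)" if "y \<in> V" for y
    by (rule sum_nonzero_eq_sum_superset[symmetric]) (use fin that in auto)
  ultimately have "continuous_map (subtopology X V) euclideanreal (\<lambda>y. \<Sum>j\<in>{j\<in>J. f j y \<noteq> 0}. f j y)"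
    by (rule continuous_map_eq) (use openin_subset[OF V(1)] in auto)
  then show "\<exists>V. openin X V \<and> x \<in> V \<and> continuous_map (subtopology X V) euclideanreal (\<lambda>x. \<Sum>j\<in>{j\<in>J. f j x \<noteq> 0}. f j x)"
    using V by blast
qed

lemma closure_of_locally_finite_sum_support:
  assumes "locally_finite_family X J f"
  shows "X closure_of {x\<in>topspace X. (\<Sum>j\<in>{j\<in>J. f j x \<noteq> 0}. f j x) \<noteq> 0}
           \<subseteq> (\<Union>j\<in>J. X closure_of {x\<in>topspace X. f j x \<noteq> 0})"
proof
  fix z assume z: "z \<in> X closure_of {x\<in>topspace X. (\<Sum>j\<in>{j\<in>J. f j x \<noteq> 0}. f j x) \<noteq> 0}"
  show "z \<in> (\<Union>j\<in>J. X closure_of {x\<in>topspace X. f j x \<noteq> 0})"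
  proof (rule ccontr)
    assume nz: "z \<notin> (\<Union>j\<in>J. X closure_of {x\<in>topspace X. f j x \<noteq> 0})"
    have "z \<in> topspace X" using z in_closure_of by fastforce
    then obtain V where V: "openin X V" "z \<in> V" and fin: "finite {j\<in>J. \<exists>y\<in>V. f j y \<noteq> 0}"
      using assms unfolding locally_finite_family_def by blast
    define T where "T = V - (\<Union>j\<in>{j\<in>J. \<exists>y\<in>V. f j y \<noteq> 0}. X closure_of {x\<in>topspace X. f j x \<noteq> 0})"
    have "openin X T"
      unfolding T_def using fin by (intro openin_diff V(1) closedin_Union) auto
    moreover have "z \<in> T" using nz V(2) by (auto simp: T_def)
    ultimately obtain y where y: "y \<in> topspace X" "y \<in> T" "(\<Sum>j\<in>{j\<in>J. f j y \<noteq> 0}. f j y) \<noteq> 0"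
      using z unfolding in_closure_of by blast
    then obtain j where "j \<in> J" "f j y \<noteq> 0"
      by (metis (mono_tags, lifting) empty_iff mem_Collect_eq sum.neutral)
    moreover have "y \<in> X closure_of {x\<in>topspace X. f j x \<noteq> 0}" if "f j y \<noteq> 0"
      using closure_of_subset[of "{x\<in>topspace X. f j x \<noteq> 0}" X] y(1) that by blast
    ultimately show False using y(2) by (auto simp: T_def)
  qed
qed

lemma indexed_partition_of_unity_imp_continuous:
  "indexed_partition_of_unity X J f \<Longrightarrow> j \<in> J \<Longrightarrow> continuous_map X euclideanreal (f j)"
  and indexed_partition_of_unity_imp_nonneg:
  "indexed_partition_of_unity X J f \<Longrightarrow> j \<in> J \<Longrightarrow> x \<in> topspace X \<Longrightarrow> 0 \<le> f j x"
  and indexed_partition_of_unity_imp_sum_eq_1: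
  "indexed_partition_of_unity X J f \<Longrightarrow> x \<in> topspace X \<Longrightarrow> (\<Sum>j\<in>{j\<in>J. f j x \<noteq> 0}. f j x) = 1"
  and indexed_partition_of_unity_imp_locally_finite:
  "indexed_partition_of_unity X J f \<Longrightarrow> locally_finite_family X J f"
  by (auto simp: indexed_partition_of_unity_def point_finite_partition_of_unity_def)

lemma indexed_partition_of_unityI:
  assumes "\<And>j. j \<in> J \<Longrightarrow> continuous_map X euclideanreal (f j)"
    and "\<And>j x. j \<in> J \<Longrightarrow> x \<in> topspace X \<Longrightarrow> 0 \<le> f j x"
    and "locally_finite_family X J f"
    and "\<And>x. x \<in> topspace X \<Longrightarrow> (\<Sum>j\<in>{j\<in>J. f j x \<noteq> 0}. f j x) = 1"
  shows "indexed_partition_of_unity X J f"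
  using assms locally_finite_family_imp_finite
  by (auto simp: indexed_partition_of_unity_def point_finite_partition_of_unity_def)

lemma locally_finite_partition_of_unity_iff_indexed:
  "locally_finite_partition_of_unity X F \<longleftrightarrow> indexed_partition_of_unity X F (\<lambda>f. f)"
  using locally_finite_family_imp_finite[of X F "\<lambda>f. f"]
  by (auto simp: locally_finite_partition_of_unity_def indexed_partition_of_unity_def
      point_finite_partition_of_unity_def locally_finite_family_def)

lemma indexed_partition_of_unity_cong:
  assumes "indexed_partition_of_unity X J f"
    and "\<And>j x. j \<in> J \<Longrightarrow> x \<in> topspace X \<Longrightarrow> f j x = g j x"
  shows "indexed_partition_of_unity X J g"
proof (rule indexed_partition_of_unityI)
  show "continuous_map X euclideanreal (g j)" if "j \<in> J" for j
    using indexed_partition_of_unity_imp_continuous[OF assms(1) that]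
    by (rule continuous_map_eq) (use assms(2) that in auto)
  show "locally_finite_family X J g"
    by (rule locally_finite_family_mono[OF indexed_partition_of_unity_imp_locally_finite[OF assms(1)]])
       (use assms(2) in auto)
  show "(\<Sum>j\<in>{j\<in>J. g j x \<noteq> 0}. g j x) = 1" if "x \<in> topspace X" for x
  proof -
    have "{j\<in>J. g j x \<noteq> 0} = {j\<in>J. f j x \<noteq> 0}"
      using assms(2) that by auto
    then show ?thesis
      using indexed_partition_of_unity_imp_sum_eq_1[OF assms(1) that] assms(2) that by simp
  qed
  show "0 \<le> g j x" if "j \<in> J" "x \<in> topspace X" for j x
    using indexed_partition_of_unity_imp_nonneg[OF assms(1) that] assms(2)[OF that] by simp
qed

lemma indexed_partition_of_unity_regroup:
  assumes g: "indexed_partition_of_unity X I g" and c: "c ` I \<subseteq> J"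
  defines "f \<equiv> \<lambda>j x. \<Sum>i\<in>{i\<in>{i\<in>I. c i = j}. g i x \<noteq> 0}. g i x"
  shows "indexed_partition_of_unity X J f"
    and "X closure_of {x\<in>topspace X. f j x \<noteq> 0}
           \<subseteq> (\<Union>i\<in>{i\<in>I. c i = j}. X closure_of {x\<in>topspace X. g i x \<noteq> 0})"
proof -
  have lf: "locally_finite_family X I g"
    using g by (rule indexed_partition_of_unity_imp_locally_finite)
  have lf_fibre: "locally_finite_family X {i\<in>I. c i = j} g" for j
    by (rule locally_finite_family_mono[OF lf]) auto
  have f_nz: "\<exists>i\<in>I. c i = j \<and> g i x \<noteq> 0" if "f j x \<noteq> 0" for j x
    using that unfolding f_def by (rule sum.not_neutral_contains_not_neutral) auto
  show "X closure_of {x\<in>topspace X. f j x \<noteq> 0}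
          \<subseteq> (\<Union>i\<in>{i\<in>I. c i = j}. X closure_of {x\<in>topspace X. g i x \<noteq> 0})"
    unfolding f_def by (rule closure_of_locally_finite_sum_support[OF lf_fibre])
  show "indexed_partition_of_unity X J f"
  proof (rule indexed_partition_of_unityI)
    show "continuous_map X euclideanreal (f j)" for j
      unfolding f_def
      by (rule continuous_map_locally_finite_sum[OF _ lf_fibre])
         (use indexed_partition_of_unity_imp_continuous[OF g] in auto)
    show "0 \<le> f j x" if "x \<in> topspace X" for j x
      unfolding f_def using indexed_partition_of_unity_imp_nonneg[OF g _ that] by (auto intro: sum_nonneg)
    show "locally_finite_family X J f"
      unfolding locally_finite_family_def
    proof
      fix x assume "x \<in> topspace X"
      then obtain V where V: "openin X V" "x \<in> V" and fin: "finite {i\<in>I. \<exists>y\<in>V. g i y \<noteq> 0}"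
        using lf unfolding locally_finite_family_def by blast
      have "{j\<in>J. \<exists>y\<in>V. f j y \<noteq> 0} \<subseteq> c ` {i\<in>I. \<exists>y\<in>V. g i y \<noteq> 0}"
        using f_nz by blast
      then have "finite {j\<in>J. \<exists>y\<in>V. f j y \<noteq> 0}"
        using fin by (rule finite_subset[OF _ finite_imageI])
      then show "\<exists>V. openin X V \<and> x \<in> V \<and> finite {j\<in>J. \<exists>y\<in>V. f j y \<noteq> 0}"
        using V by blast
    qed
    show "(\<Sum>j\<in>{j\<in>J. f j x \<noteq> 0}. f j x) = 1" if x: "x \<in> topspace X" for x
    proof -
      define Ix where "Ix = {i\<in>I. g i x \<noteq> 0}"
      have fin: "finite Ix"
        unfolding Ix_def using lf x by (rule locally_finite_family_imp_finite)
      have "f j x = (\<Sum>i\<in>{i\<in>Ix. c i = j}. g i x)" for j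
        unfolding f_def Ix_def by (rule sum.cong) auto
      moreover have "(\<Sum>j\<in>{j\<in>J. f j x \<noteq> 0}. f j x) = (\<Sum>j\<in>c ` Ix. f j x)"
        by (rule sum_nonzero_eq_sum_superset) (use fin f_nz c in \<open>auto simp: Ix_def\<close>)
      ultimately have "(\<Sum>j\<in>{j\<in>J. f j x \<noteq> 0}. f j x) = (\<Sum>i\<in>Ix. g i x)"
        using sum.group[OF fin finite_imageI[OF fin] subset_refl, of "\<lambda>i. g i x"] by simp
      then show ?thesis
        using indexed_partition_of_unity_imp_sum_eq_1[OF g x] by (simp add: Ix_def)
    qed
  qed
qed

lemma paracompact_space_imp_indexed_partition_of_unity:
  assumes para: "paracompact_space X"
    and opn: "\<And>j. j \<in> J \<Longrightarrow> openin X (U j \<inter> topspace X)"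
    and cov: "topspace X \<subseteq> (\<Union>j\<in>J. U j)"
  obtains f where "indexed_partition_of_unity X J f" "subordinate_family X J f U"
proof -
  have cover: "(\<forall>V\<in>(\<lambda>j. U j \<inter> topspace X) ` J. openin X V) \<and> \<Union>((\<lambda>j. U j \<inter> topspace X) ` J) = topspace X"
    using opn cov by auto
  obtain F where F: "locally_finite_partition_of_unity X F"
    and sub: "subordinate_to X F ((\<lambda>j. U j \<inter> topspace X) ` J)"
    using para[unfolded paracompact_space_def, rule_format, OF cover] by blast
  have "\<forall>g\<in>F. \<exists>j. j \<in> J \<and> X closure_of {x\<in>topspace X. g x \<noteq> 0} \<subseteq> U j"
    using sub unfolding subordinate_to_def by blast
  then obtain c where c: "\<And>g. g \<in> F \<Longrightarrow> c g \<in> J \<and> X closure_of {x\<in>topspace X. g x \<noteq> 0} \<subseteq> U (c g)"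
    by metis
  note regroup = indexed_partition_of_unity_regroup[where I=F and g="\<lambda>g. g" and c=c]
  show thesis
  proof
    show "indexed_partition_of_unity X J (\<lambda>j x. \<Sum>g\<in>{g\<in>{g\<in>F. c g = j}. g x \<noteq> 0}. g x)"
      using regroup(1) F c by (auto simp: locally_finite_partition_of_unity_iff_indexed)
    show "subordinate_family X J (\<lambda>j x. \<Sum>g\<in>{g\<in>{g\<in>F. c g = j}. g x \<noteq> 0}. g x) U"
      unfolding subordinate_family_def
      using regroup(2) F c by (force simp: locally_finite_partition_of_unity_iff_indexed)
  qed
qed

section \<open>From indexed partitions of unity to sets of functions\<close>

definition proportional :: "('a \<Rightarrow> real) \<Rightarrow> ('a \<Rightarrow> real) \<Rightarrow> bool" where
  "proportional f g \<longleftrightarrow> (\<exists>c>0. g = (\<lambda>x. c * f x))"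

lemma proportional_refl: "proportional f f"
  unfolding proportional_def by (rule exI[of _ 1]) simp

lemma proportional_sym:
  assumes "proportional f g"
  shows "proportional g f"
proof -
  obtain c where "c > 0" "g = (\<lambda>x. c * f x)"
    using assms unfolding proportional_def by blast
  then show ?thesis
    unfolding proportional_def by (intro exI[of _ "1 / c"]) auto
qed

lemma proportional_trans:
  assumes "proportional f g" "proportional g h"
  shows "proportional f h"
proof -
  obtain c d where "c > 0" "g = (\<lambda>x. c * f x)" "d > 0" "h = (\<lambda>x. d * g x)"
    using assms unfolding proportional_def by blast
  then show ?thesis
    unfolding proportional_def by (intro exI[of _ "d * c"]) auto
qed

lemma proportional_nonzero_iff: "proportional f g \<Longrightarrow> g x \<noteq> 0 \<longleftrightarrow> f x \<noteq> 0"
  unfolding proportional_def by auto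

lemma proportional_sum:
  assumes "finite A" "A \<noteq> {}" "\<And>m. m \<in> A \<Longrightarrow> proportional f (w m)"
  shows "proportional f (\<lambda>x. \<Sum>m\<in>A. w m x)"
  using assms
proof (induction A rule: finite_ne_induct)
  case (singleton m)
  then show ?case by simp
next
  case (insert m A)
  then obtain c d where "c > 0" "w m = (\<lambda>x. c * f x)" "d > 0" "(\<lambda>x. \<Sum>m\<in>A. w m x) = (\<lambda>x. d * f x)"
    unfolding proportional_def by blast
  then have "(\<lambda>x. \<Sum>m\<in>insert m A. w m x) = (\<lambda>x. (c + d) * f x)"
    using insert.hyps by (auto simp: fun_eq_iff distrib_right dest: fun_cong)
  then show ?case
    unfolding proportional_def using \<open>c > 0\<close> \<open>d > 0\<close> by (intro exI[of _ "c + d"]) simp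
qed

text \<open>A set of functions cannot list a function twice, so the members of an indexed partition of
  unity have to be merged. Merging equal members could create new coincidences (f and 2 f); merging
  the classes of positive multiples cannot.\<close>
definition proportional_merge :: "'j set \<Rightarrow> ('j \<Rightarrow> 'a \<Rightarrow> real) \<Rightarrow> 'j \<Rightarrow> 'a \<Rightarrow> real" where
  "proportional_merge J w k x = (\<Sum>m\<in>{m\<in>{m\<in>J. proportional (w k) (w m)}. w m x \<noteq> 0}. w m x)"

lemma proportional_merge_nonzero:
  assumes "proportional_merge J w k x \<noteq> 0"
  shows "w k x \<noteq> 0"
proof
  assume "w k x = 0"
  have "w m x = 0" if "proportional (w k) (w m)" for m
    using proportional_nonzero_iff[OF that, of x] \<open>w k x = 0\<close> by simp
  then have "{m\<in>{m\<in>J. proportional (w k) (w m)}. w m x \<noteq> 0} = {}"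
    by blast
  then show False
    using assms by (simp add: proportional_merge_def)
qed

lemma proportional_merge_proportional:
  assumes w: "locally_finite_family X J w" and k: "k \<in> J" and x: "x \<in> topspace X" "w k x \<noteq> 0"
  shows "proportional (w k) (proportional_merge J w k)"
proof -
  let ?cls = "{m\<in>J. proportional (w k) (w m)}"
  have "?cls \<subseteq> {m\<in>J. w m x \<noteq> 0}"
  proof
    fix m assume "m \<in> ?cls"
    then show "m \<in> {m\<in>J. w m x \<noteq> 0}"
      using proportional_nonzero_iff[of "w k" "w m" x] x(2) by simp
  qed
  then have fin: "finite ?cls"
    using locally_finite_family_imp_finite[OF w x(1)] by (rule finite_subset)
  have "proportional (w k) (\<lambda>y. \<Sum>m\<in>?cls. w m y)"
    using k proportional_refl by (intro proportional_sum fin) auto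
  moreover have "proportional_merge J w k = (\<lambda>y. \<Sum>m\<in>?cls. w m y)"
    unfolding proportional_merge_def[abs_def] by (intro ext sum.mono_neutral_left fin) auto
  ultimately show ?thesis by simp
qed

lemma proportional_merge_fibre:
  assumes w: "locally_finite_family X J w" and k: "k \<in> J" and x: "x \<in> topspace X"
  shows "{i\<in>{i\<in>J. proportional_merge J w i = proportional_merge J w k}. w i x \<noteq> 0}
           = {m\<in>{m\<in>J. proportional (w k) (w m)}. w m x \<noteq> 0}"
proof (intro set_eqI iffI)
  fix i assume "i \<in> {i\<in>{i\<in>J. proportional_merge J w i = proportional_merge J w k}. w i x \<noteq> 0}"
  then have i: "i \<in> J" "proportional_merge J w i = proportional_merge J w k" "w i x \<noteq> 0"
    by auto
  have p1: "proportional (w i) (proportional_merge J w k)"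
    using proportional_merge_proportional[OF w i(1) x i(3)] i(2) by simp
  then have "proportional_merge J w k x \<noteq> 0"
    using proportional_nonzero_iff[OF p1, of x] i(3) by simp
  then have "w k x \<noteq> 0"
    by (rule proportional_merge_nonzero)
  then have "proportional (w k) (proportional_merge J w k)"
    by (rule proportional_merge_proportional[OF w k x])
  then have "proportional (w k) (w i)"
    using proportional_sym[OF p1] by (rule proportional_trans)
  then show "i \<in> {m\<in>{m\<in>J. proportional (w k) (w m)}. w m x \<noteq> 0}"
    using i by simp
next
  fix m assume m: "m \<in> {m\<in>{m\<in>J. proportional (w k) (w m)}. w m x \<noteq> 0}"
  then have pkm: "proportional (w k) (w m)" by simp
  have "proportional (w m) (w i) \<longleftrightarrow> proportional (w k) (w i)" for i
    using proportional_trans[OF pkm] proportional_trans[OF proportional_sym[OF pkm]] by blast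
  then have "{i\<in>J. proportional (w m) (w i)} = {i\<in>J. proportional (w k) (w i)}"
    by simp
  then have "proportional_merge J w m = proportional_merge J w k"
    unfolding proportional_merge_def[abs_def] by simp
  then show "m \<in> {i\<in>{i\<in>J. proportional_merge J w i = proportional_merge J w k}. w i x \<noteq> 0}"
    using m by simp
qed

lemma indexed_partition_of_unity_imp_locally_finite_partition_of_unity:
  assumes w: "indexed_partition_of_unity X J w" and sub: "subordinate_family X J w U"
    and U: "U ` J \<subseteq> \<U>"
  shows "\<exists>F. locally_finite_partition_of_unity X F \<and> subordinate_to X F \<U>"
proof -
  let ?H = "proportional_merge J w"
  have lf: "locally_finite_family X J w"
    using w by (rule indexed_partition_of_unity_imp_locally_finite)
  have "indexed_partition_of_unity X (?H ` J) (\<lambda>h x. \<Sum>i\<in>{i\<in>{i\<in>J. ?H i = h}. w i x \<noteq> 0}. w i x)"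
    by (rule indexed_partition_of_unity_regroup(1)[OF w]) simp
  then have "indexed_partition_of_unity X (?H ` J) (\<lambda>h. h)"
  proof (rule indexed_partition_of_unity_cong)
    fix h x assume "h \<in> ?H ` J" and x: "x \<in> topspace X"
    then obtain k where k: "k \<in> J" "h = ?H k" by blast
    show "(\<Sum>i\<in>{i\<in>{i\<in>J. ?H i = h}. w i x \<noteq> 0}. w i x) = h x"
      unfolding k(2) proportional_merge_fibre[OF lf k(1) x] by (simp add: proportional_merge_def)
  qed
  moreover have "subordinate_to X (?H ` J) \<U>"
    unfolding subordinate_to_def
  proof
    fix h assume "h \<in> ?H ` J"
    then obtain k where k: "k \<in> J" "h = ?H k" by blast
    have "X closure_of {x\<in>topspace X. ?H k x \<noteq> 0} \<subseteq> X closure_of {x\<in>topspace X. w k x \<noteq> 0}"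
      using proportional_merge_nonzero[of J w k] by (intro closure_of_mono) auto
    also have "\<dots> \<subseteq> U k"
      using sub k(1) by (simp add: subordinate_family_def)
    finally show "\<exists>V\<in>\<U>. X closure_of {x\<in>topspace X. h x \<noteq> 0} \<subseteq> V"
      using k U by blast
  qed
  ultimately show ?thesis
    by (auto simp: locally_finite_partition_of_unity_iff_indexed)
qed

section \<open>Dold's construction for point-finite partitions of unity\<close>

lemma continuous_map_Max:
  assumes "finite E" "E \<noteq> {}" "\<And>j. j \<in> E \<Longrightarrow> continuous_map X euclideanreal (f j)"
  shows "continuous_map X euclideanreal (\<lambda>x. Max ((\<lambda>j. f j x) ` E))"
  using assms
proof (induction E rule: finite_ne_induct)
  case (insert j E)
  then show ?case by (simp add: continuous_map_real_max)
qed simp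

lemma indexed_partition_of_unity_normalize:
  assumes cont: "\<And>j. j \<in> J \<Longrightarrow> continuous_map X euclideanreal (v j)"
    and nonneg: "\<And>j x. j \<in> J \<Longrightarrow> x \<in> topspace X \<Longrightarrow> 0 \<le> v j x"
    and lf: "locally_finite_family X J v"
    and pos: "\<And>x. x \<in> topspace X \<Longrightarrow> 0 < (\<Sum>j\<in>{j\<in>J. v j x \<noteq> 0}. v j x)"
  shows "indexed_partition_of_unity X J (\<lambda>j x. v j x / (\<Sum>i\<in>{i\<in>J. v i x \<noteq> 0}. v i x))"
proof -
  define s where "s x = (\<Sum>i\<in>{i\<in>J. v i x \<noteq> 0}. v i x)" for x
  have nonzero_iff: "v j x / s x \<noteq> 0 \<longleftrightarrow> v j x \<noteq> 0" if "x \<in> topspace X" for j x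
    using pos[OF that] by (simp add: s_def)
  have "indexed_partition_of_unity X J (\<lambda>j x. v j x / s x)"
  proof (rule indexed_partition_of_unityI)
    show "continuous_map X euclideanreal (\<lambda>x. v j x / s x)" if "j \<in> J" for j
      unfolding s_def
      by (intro continuous_map_real_divide cont that continuous_map_locally_finite_sum lf)
         (use pos in force)+
    show "0 \<le> v j x / s x" if "j \<in> J" "x \<in> topspace X" for j x
      using nonneg[OF that] pos[OF that(2)] by (simp add: s_def)
    show "locally_finite_family X J (\<lambda>j x. v j x / s x)"
      by (rule locally_finite_family_mono[OF lf]) (use nonzero_iff in blast)
    show "(\<Sum>j\<in>{j\<in>J. v j x / s x \<noteq> 0}. v j x / s x) = 1" if "x \<in> topspace X" for x
    proof -
      have "(\<Sum>j\<in>{j\<in>J. v j x / s x \<noteq> 0}. v j x / s x) = (\<Sum>j\<in>{j\<in>J. v j x \<noteq> 0}. v j x) / s x"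
        using nonzero_iff[OF that] by (simp add: sum_divide_distrib)
      then show ?thesis
        using pos[OF that] by (simp add: s_def)
    qed
  qed
  then show ?thesis
    by (simp add: s_def)
qed

lemma openin_continuous_map_less:
  assumes "continuous_map X euclideanreal f" "continuous_map X euclideanreal g"
  shows "openin X {x\<in>topspace X. f x < g x}"
proof -
  have "continuous_map X euclideanreal (\<lambda>x. f x - g x)"
    using assms by (rule continuous_map_diff)
  then have "openin X {x\<in>topspace X. f x - g x < 0}"
    unfolding continuous_map_upper_lower_semicontinuous_lte by blast
  then show ?thesis by simp
qed

lemma closedin_continuous_map_le:
  assumes "continuous_map X euclideanreal f" "continuous_map X euclideanreal g"
  shows "closedin X {x\<in>topspace X. f x \<le> g x}"
proof -
  have "continuous_map X euclideanreal (\<lambda>x. f x - g x)"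
    using assms by (rule continuous_map_diff)
  then have "closedin X {x\<in>topspace X. f x - g x \<le> 0}"
    unfolding continuous_map_upper_lower_semicontinuous_lte by blast
  then show ?thesis by simp
qed

definition family_max :: "'j set \<Rightarrow> ('j \<Rightarrow> 'a \<Rightarrow> real) \<Rightarrow> 'a \<Rightarrow> real" where
  "family_max J t x = Max ((\<lambda>j. t j x) ` {j\<in>J. t j x \<noteq> 0})"

context
  fixes X :: "'a topology" and J :: "'j set" and t :: "'j \<Rightarrow> 'a \<Rightarrow> real"
  assumes t: "point_finite_partition_of_unity X J t"
begin

lemma point_finite_partition_nonneg: "j \<in> J \<Longrightarrow> x \<in> topspace X \<Longrightarrow> 0 \<le> t j x"
  and point_finite_partition_finite: "x \<in> topspace X \<Longrightarrow> finite {j\<in>J. t j x \<noteq> 0}"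
  and point_finite_partition_sum_eq_1: "x \<in> topspace X \<Longrightarrow> (\<Sum>j\<in>{j\<in>J. t j x \<noteq> 0}. t j x) = 1"
  and point_finite_partition_continuous: "j \<in> J \<Longrightarrow> continuous_map X euclideanreal (t j)"
  using t by (auto simp: point_finite_partition_of_unity_def)

lemma point_finite_partition_le_tail:
  assumes x: "x \<in> topspace X" and E: "finite E" "E \<subseteq> J" and j: "j \<in> J - E"
  shows "t j x \<le> 1 - (\<Sum>i\<in>E. t i x)"
proof -
  define D where "D = {i\<in>J. t i x \<noteq> 0} \<union> E"
  have D: "finite D" "E \<subseteq> D"
    using point_finite_partition_finite[OF x] E by (auto simp: D_def)
  have "1 = (\<Sum>i\<in>D. t i x)"
    unfolding point_finite_partition_sum_eq_1[OF x, symmetric] D_def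
    by (rule sum_nonzero_eq_sum_superset) (use D E in \<open>auto simp: D_def\<close>)
  also have "\<dots> = (\<Sum>i\<in>E. t i x) + (\<Sum>i\<in>D - E. t i x)"
    using D by (metis add.commute sum.subset_diff)
  finally have eq: "(\<Sum>i\<in>D - E. t i x) = 1 - (\<Sum>i\<in>E. t i x)" by simp
  have "t j x \<le> (\<Sum>i\<in>D - E. t i x)"
  proof (cases "t j x = 0")
    case True
    then show ?thesis
      using point_finite_partition_nonneg[OF _ x] E(2) by (auto simp: D_def intro!: sum_nonneg)
  next
    case False
    then show ?thesis
      using point_finite_partition_nonneg[OF _ x] j D(1) E(2)
      by (intro member_le_sum) (auto simp: D_def)
  qed
  then show ?thesis using eq by simp
qed

lemma family_max_attained:
  assumes x: "x \<in> topspace X"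
  obtains j where "j \<in> J" "t j x \<noteq> 0" "t j x = family_max J t x"
proof -
  have "{j\<in>J. t j x \<noteq> 0} \<noteq> {}"
    using point_finite_partition_sum_eq_1[OF x] by (metis (no_types, lifting) sum.empty zero_neq_one)
  then have "family_max J t x \<in> (\<lambda>j. t j x) ` {j\<in>J. t j x \<noteq> 0}"
    unfolding family_max_def using point_finite_partition_finite[OF x] by (intro Max_in) auto
  then show thesis using that by auto
qed

lemma family_max_pos: "x \<in> topspace X \<Longrightarrow> 0 < family_max J t x"
  by (metis family_max_attained point_finite_partition_nonneg order_le_less)

lemma family_max_ge: 
  assumes "j \<in> J" "x \<in> topspace X"
  shows "t j x \<le> family_max J t x"
proof (cases "t j x = 0")
  case True
  then show ?thesis using family_max_pos[OF assms(2)] by simp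
next
  case False
  then show ?thesis
    unfolding family_max_def using point_finite_partition_finite[OF assms(2)] assms(1) by simp
qed

text \<open>Near a point x0, only the finitely many functions positive at x0 can come close to the
  maximum, since the others are bounded by 1 minus the sum of those.\<close>
lemma family_max_locally:
  assumes x0: "x0 \<in> topspace X"
  obtains N E where "openin X N" "x0 \<in> N" "finite E" "E \<noteq> {}" "E \<subseteq> J"
    and "\<And>y. y \<in> N \<Longrightarrow> family_max J t y = Max ((\<lambda>j. t j y) ` E)"
    and "\<And>j y. j \<in> J - E \<Longrightarrow> y \<in> N \<Longrightarrow> t j y < family_max J t y / 2"
proof -
  define E where "E = {j\<in>J. t j x0 \<noteq> 0}"
  obtain j0 where j0: "j0 \<in> J" "t j0 x0 \<noteq> 0"
    by (rule family_max_attained[OF x0])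
  have E: "finite E" "E \<subseteq> J" "E \<noteq> {}"
    using point_finite_partition_finite[OF x0] j0 by (auto simp: E_def)
  define m where "m y = Max ((\<lambda>j. t j y) ` E)" for y
  define r where "r y = 1 - (\<Sum>i\<in>E. t i y)" for y
  define N where "N = {y\<in>topspace X. r y < m y / 2}"
  have "openin X N"
    unfolding N_def m_def r_def
    using E point_finite_partition_continuous
    by (intro openin_continuous_map_less continuous_map_Max continuous_intros) auto
  moreover have "x0 \<in> N"
  proof -
    have "r x0 = 0"
      using point_finite_partition_sum_eq_1[OF x0] by (simp add: r_def E_def)
    moreover have "m x0 = family_max J t x0"
      by (simp add: m_def family_max_def E_def)
    ultimately show ?thesis
      using family_max_pos[OF x0] x0 by (simp add: N_def)
  qed
  moreover have small: "t j y < m y / 2" if "j \<in> J - E" "y \<in> N" for j y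
    using point_finite_partition_le_tail[of y E j] E that by (auto simp: N_def r_def)
  moreover have "family_max J t y = m y" if y: "y \<in> N" for y
  proof (rule antisym)
    have yX: "y \<in> topspace X" using y by (simp add: N_def)
    obtain j where j: "j \<in> J" "t j y = family_max J t y"
      by (rule family_max_attained[OF yX])
    obtain e where "e \<in> E" using E(3) by blast
    then have "m y \<ge> 0"
      unfolding m_def using E point_finite_partition_nonneg[OF _ yX]
      by (intro order_trans[OF _ Max_ge[where x="t e y"]]) auto
    show "family_max J t y \<le> m y"
    proof (cases "j \<in> E")
      case True
      then have "t j y \<le> m y"
        unfolding m_def using E by (intro Max_ge) auto
      then show ?thesis using j by simp
    next
      case False
      then have "t j y < m y / 2"
        using small j(1) y by blast
      then show ?thesis using j \<open>m y \<ge> 0\<close> by linarith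
    qed
    have "m y \<in> (\<lambda>j. t j y) ` E"
      unfolding m_def using E by (intro Max_in) auto
    then show "m y \<le> family_max J t y"
      using family_max_ge[OF _ yX] E by auto
  qed
  ultimately show ?thesis
    using that[of N E] E by (simp add: m_def)
qed

lemma continuous_map_family_max: "continuous_map X euclideanreal (family_max J t)"
proof (rule continuous_map_locally)
  fix x0 assume "x0 \<in> topspace X"
  then obtain N E where N: "openin X N" "x0 \<in> N" and E: "finite E" "E \<noteq> {}" "E \<subseteq> J"
    and eq: "\<And>y. y \<in> N \<Longrightarrow> family_max J t y = Max ((\<lambda>j. t j y) ` E)"
    and "\<And>j y. j \<in> J - E \<Longrightarrow> y \<in> N \<Longrightarrow> t j y < family_max J t y / 2"
    by (rule family_max_locally) blast
  have "continuous_map X euclideanreal (\<lambda>y. Max ((\<lambda>j. t j y) ` E))"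
    using E point_finite_partition_continuous by (intro continuous_map_Max) auto
  then have "continuous_map (subtopology X N) euclideanreal (family_max J t)"
    by (rule continuous_map_eq[OF continuous_map_from_subtopology]) (simp add: eq)
  then show "\<exists>N. openin X N \<and> x0 \<in> N \<and> continuous_map (subtopology X N) euclideanreal (family_max J t)"
    using N by blast
qed

text \<open>Dold's trick: cutting each function off at half the pointwise maximum leaves, near every point,
  only the finitely many functions that are positive there.\<close>
lemma point_finite_partition_imp_indexed_partition_of_unity:
  assumes U: "\<And>j x. j \<in> J \<Longrightarrow> x \<in> topspace X \<Longrightarrow> t j x \<noteq> 0 \<Longrightarrow> x \<in> U j"
  obtains w where "indexed_partition_of_unity X J w" "subordinate_family X J w U"
proof -
  define v where "v j x = max 0 (t j x - family_max J t x / 2)" for j x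
  have v_cont: "continuous_map X euclideanreal (v j)" if "j \<in> J" for j
    unfolding v_def[abs_def] using that point_finite_partition_continuous continuous_map_family_max
    by (intro continuous_intros continuous_map_real_max) auto
  have v_lf: "locally_finite_family X J v"
    unfolding locally_finite_family_def
  proof
    fix x0 assume "x0 \<in> topspace X"
    then obtain N E where N: "openin X N" "x0 \<in> N" and E: "finite E" "E \<noteq> {}" "E \<subseteq> J"
      and "\<And>y. y \<in> N \<Longrightarrow> family_max J t y = Max ((\<lambda>j. t j y) ` E)"
      and small: "\<And>j y. j \<in> J - E \<Longrightarrow> y \<in> N \<Longrightarrow> t j y < family_max J t y / 2"
      by (rule family_max_locally) blast
    have "{j\<in>J. \<exists>y\<in>N. v j y \<noteq> 0} \<subseteq> E"
    proof clarify
      fix j y assume "j \<in> J" "y \<in> N" "v j y \<noteq> 0"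
      then show "j \<in> E"
        using small[of j y] by (cases "j \<in> E") (auto simp: v_def max_def)
    qed
    then have "finite {j\<in>J. \<exists>y\<in>N. v j y \<noteq> 0}"
      using E(1) by (rule finite_subset)
    then show "\<exists>N. openin X N \<and> x0 \<in> N \<and> finite {j\<in>J. \<exists>y\<in>N. v j y \<noteq> 0}"
      using N by blast
  qed
  have v_pos: "0 < (\<Sum>j\<in>{j\<in>J. v j x \<noteq> 0}. v j x)" if x: "x \<in> topspace X" for x
  proof -
    obtain j where j: "j \<in> J" "t j x = family_max J t x"
      by (rule family_max_attained[OF x])
    have vj: "v j x = family_max J t x / 2"
      using j family_max_pos[OF x] by (simp add: v_def)
    have "v j x \<le> (\<Sum>j\<in>{j\<in>J. v j x \<noteq> 0}. v j x)"
      using j vj family_max_pos[OF x] locally_finite_family_imp_finite[OF v_lf x]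
      by (intro member_le_sum) (auto simp: v_def)
    then show ?thesis
      using vj family_max_pos[OF x] by simp
  qed
  define w where "w j x = v j x / (\<Sum>i\<in>{i\<in>J. v i x \<noteq> 0}. v i x)" for j x
  have "indexed_partition_of_unity X J w"
    unfolding w_def[abs_def]
    by (rule indexed_partition_of_unity_normalize[OF v_cont _ v_lf v_pos]) (auto simp: v_def)
  moreover have "subordinate_family X J w U"
    unfolding subordinate_family_def
  proof
    fix j assume j: "j \<in> J"
    have "{x\<in>topspace X. w j x \<noteq> 0} \<subseteq> {x\<in>topspace X. family_max J t x / 2 \<le> t j x}"
      by (auto simp: w_def v_def)
    then have "X closure_of {x\<in>topspace X. w j x \<noteq> 0} \<subseteq> {x\<in>topspace X. family_max J t x / 2 \<le> t j x}"
      using continuous_map_family_max point_finite_partition_continuous[OF j]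
      by (intro closure_of_minimal closedin_continuous_map_le continuous_intros) auto
    also have "\<dots> \<subseteq> U j"
      using U[OF j] family_max_pos by force
    finally show "X closure_of {x\<in>topspace X. w j x \<noteq> 0} \<subseteq> U j" .
  qed
  ultimately show thesis by (rule that)
qed

end

section \<open>Extension from a closed neighbourhood retract\<close>

lemma indexed_partition_of_unity_add:
  assumes a: "\<And>j. j \<in> J \<Longrightarrow> continuous_map X euclideanreal (a j)"
      "\<And>j x. j \<in> J \<Longrightarrow> x \<in> topspace X \<Longrightarrow> 0 \<le> a j x" "locally_finite_family X J a"
    and b: "\<And>j. j \<in> J \<Longrightarrow> continuous_map X euclideanreal (b j)"
      "\<And>j x. j \<in> J \<Longrightarrow> x \<in> topspace X \<Longrightarrow> 0 \<le> b j x" "locally_finite_family X J b"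
    and sum: "\<And>x. x \<in> topspace X \<Longrightarrow>
      (\<Sum>j\<in>{j\<in>J. a j x \<noteq> 0}. a j x) + (\<Sum>j\<in>{j\<in>J. b j x \<noteq> 0}. b j x) = 1"
  shows "indexed_partition_of_unity X J (\<lambda>j x. a j x + b j x)"
proof (rule indexed_partition_of_unityI)
  show "continuous_map X euclideanreal (\<lambda>x. a j x + b j x)" if "j \<in> J" for j
    using a(1)[OF that] b(1)[OF that] by (rule continuous_map_add)
  show "0 \<le> a j x + b j x" if "j \<in> J" "x \<in> topspace X" for j x
    using a(2)[OF that] b(2)[OF that] by simp
  show "locally_finite_family X J (\<lambda>j x. a j x + b j x)"
    unfolding locally_finite_family_def
  proof
    fix x assume "x \<in> topspace X"
    then obtain V1 V2 where V: "openin X V1" "x \<in> V1" "openin X V2" "x \<in> V2"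
      and fin: "finite {j\<in>J. \<exists>y\<in>V1. a j y \<noteq> 0}" "finite {j\<in>J. \<exists>y\<in>V2. b j y \<noteq> 0}"
      using a(3) b(3) unfolding locally_finite_family_def by meson
    have "{j\<in>J. \<exists>y\<in>V1 \<inter> V2. a j y + b j y \<noteq> 0}
            \<subseteq> {j\<in>J. \<exists>y\<in>V1. a j y \<noteq> 0} \<union> {j\<in>J. \<exists>y\<in>V2. b j y \<noteq> 0}"
      by auto
    then have "finite {j\<in>J. \<exists>y\<in>V1 \<inter> V2. a j y + b j y \<noteq> 0}"
      using fin by (meson finite_UnI finite_subset)
    then show "\<exists>V. openin X V \<and> x \<in> V \<and> finite {j\<in>J. \<exists>y\<in>V. a j y + b j y \<noteq> 0}"
      using V by (intro exI[of _ "V1 \<inter> V2"]) auto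
  qed
  show "(\<Sum>j\<in>{j\<in>J. a j x + b j x \<noteq> 0}. a j x + b j x) = 1" if x: "x \<in> topspace X" for x
  proof -
    define D where "D = {j\<in>J. a j x \<noteq> 0} \<union> {j\<in>J. b j x \<noteq> 0}"
    have D: "finite D" "D \<subseteq> J"
      using locally_finite_family_imp_finite[OF a(3) x] locally_finite_family_imp_finite[OF b(3) x]
      by (auto simp: D_def)
    have "(\<Sum>j\<in>{j\<in>J. a j x + b j x \<noteq> 0}. a j x + b j x) = (\<Sum>j\<in>D. a j x) + (\<Sum>j\<in>D. b j x)"
      unfolding sum.distrib[symmetric]
      by (rule sum_nonzero_eq_sum_superset) (use D in \<open>auto simp: D_def\<close>)
    also have "\<dots> = (\<Sum>j\<in>{j\<in>J. a j x \<noteq> 0}. a j x) + (\<Sum>j\<in>{j\<in>J. b j x \<noteq> 0}. b j x)"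
    proof -
      have "(\<Sum>j\<in>{j\<in>J. a j x \<noteq> 0}. a j x) = (\<Sum>j\<in>D. a j x)"
        "(\<Sum>j\<in>{j\<in>J. b j x \<noteq> 0}. b j x) = (\<Sum>j\<in>D. b j x)"
        by (rule sum_nonzero_eq_sum_superset; use D in \<open>auto simp: D_def\<close>)+
      then show ?thesis by simp
    qed
    finally show ?thesis
      using sum[OF x] by simp
  qed
qed

lemma indexed_partition_of_unity_blend:
  assumes g: "\<And>j. j \<in> J \<Longrightarrow> continuous_map X euclideanreal (g j)"
      "\<And>j x. j \<in> J \<Longrightarrow> x \<in> topspace X \<Longrightarrow> 0 \<le> g j x" "locally_finite_family X J g"
      "\<And>x. x \<in> topspace X \<Longrightarrow> (\<Sum>j\<in>{j\<in>J. g j x \<noteq> 0}. g j x) = l x"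
    and l: "continuous_map X euclideanreal l" "\<And>x. x \<in> topspace X \<Longrightarrow> l x \<le> 1"
    and e: "indexed_partition_of_unity X J e"
  shows "indexed_partition_of_unity X J (\<lambda>j x. g j x + (1 - l x) * e j x)"
proof (rule indexed_partition_of_unity_add[OF g(1-3)])
  show "continuous_map X euclideanreal (\<lambda>x. (1 - l x) * e j x)" if "j \<in> J" for j
    using l(1) indexed_partition_of_unity_imp_continuous[OF e that] by (intro continuous_intros) auto
  show "0 \<le> (1 - l x) * e j x" if "j \<in> J" "x \<in> topspace X" for j x
    using l(2)[OF that(2)] indexed_partition_of_unity_imp_nonneg[OF e that] by simp
  show "locally_finite_family X J (\<lambda>j x. (1 - l x) * e j x)"
    by (rule locally_finite_family_mono[OF indexed_partition_of_unity_imp_locally_finite[OF e]]) auto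
  show "(\<Sum>j\<in>{j\<in>J. g j x \<noteq> 0}. g j x) + (\<Sum>j\<in>{j\<in>J. (1 - l x) * e j x \<noteq> 0}. (1 - l x) * e j x) = 1"
    if x: "x \<in> topspace X" for x
  proof (cases "l x = 1")
    case False
    then have "{j\<in>J. (1 - l x) * e j x \<noteq> 0} = {j\<in>J. e j x \<noteq> 0}" by auto
    then show ?thesis
      using indexed_partition_of_unity_imp_sum_eq_1[OF e x] g(4)[OF x]
      by (simp add: sum_distrib_left[symmetric])
  qed (simp add: g(4)[OF x])
qed

lemma paracompact_space_cutoff:
  assumes para: "paracompact_space X" and A: "closedin X A" and W: "openin X W" "A \<subseteq> W"
  obtains l where "continuous_map X euclideanreal l" "\<And>x. x \<in> topspace X \<Longrightarrow> 0 \<le> l x \<and> l x \<le> 1"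
    "\<And>x. x \<in> A \<Longrightarrow> l x = 1" "X closure_of {x\<in>topspace X. l x \<noteq> 0} \<subseteq> W"
proof -
  define U where "U b = (if b then W else topspace X - A)" for b
  have "openin X (U b \<inter> topspace X)" for b
    using W A openin_subset[OF W(1)] by (auto simp: U_def Int_absorb2 openin_diff)
  moreover have "topspace X \<subseteq> (\<Union>b. U b)"
    using W(2) by (auto simp: U_def)
  ultimately obtain f where f: "indexed_partition_of_unity X UNIV f" "subordinate_family X UNIV f U"
    using paracompact_space_imp_indexed_partition_of_unity[OF para] by metis
  have sum: "f True x + f False x = 1" if "x \<in> topspace X" for x
  proof -
    have "(\<Sum>b\<in>{b\<in>UNIV. f b x \<noteq> 0}. f b x) = (\<Sum>b\<in>UNIV. f b x)"
      by (rule sum_nonzero_eq_sum_superset) auto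
    then show ?thesis
      using indexed_partition_of_unity_imp_sum_eq_1[OF f(1) that] by (simp add: UNIV_bool)
  qed
  have supp: "X closure_of {x\<in>topspace X. f b x \<noteq> 0} \<subseteq> U b" for b
    using f(2) by (simp add: subordinate_family_def)
  show thesis
  proof
    show "continuous_map X euclideanreal (f True)"
      using f(1) by (simp add: indexed_partition_of_unity_imp_continuous)
    show "0 \<le> f True x \<and> f True x \<le> 1" if "x \<in> topspace X" for x
      using indexed_partition_of_unity_imp_nonneg[OF f(1) _ that, of True]
        indexed_partition_of_unity_imp_nonneg[OF f(1) _ that, of False] sum[OF that] by simp
    show "f True x = 1" if "x \<in> A" for x
    proof -
      have "x \<in> topspace X" using that closedin_subset[OF A] by blast
      moreover have "x \<notin> X closure_of {x\<in>topspace X. f False x \<noteq> 0}"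
        using supp[of False] that by (auto simp: U_def)
      ultimately have "f False x = 0"
        using closure_of_subset[of "{x\<in>topspace X. f False x \<noteq> 0}" X] by blast
      then show ?thesis using sum[OF \<open>x \<in> topspace X\<close>] by simp
    qed
    show "X closure_of {x\<in>topspace X. f True x \<noteq> 0} \<subseteq> W"
      using supp[of True] by (simp add: U_def)
  qed
qed

lemma openin_retraction_respects_supports:
  assumes W: "openin X W" and r: "continuous_map (subtopology X W) A r"
    and lf: "locally_finite_family A J f"
    and U: "\<And>j. j \<in> J \<Longrightarrow> openin X (U j \<inter> topspace X)"
  shows "openin X {w\<in>W. \<forall>j\<in>J. r w \<in> A closure_of {a\<in>topspace A. f j a \<noteq> 0} \<longrightarrow> w \<in> U j}"
    (is "openin X ?W'")
proof (subst openin_subopen, intro ballI)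
  define C where "C j = A closure_of {a\<in>topspace A. f j a \<noteq> 0}" for j
  fix w assume w: "w \<in> ?W'"
  have "r w \<in> topspace A"
    using w continuous_map_image_subset_topspace[OF r] openin_subset[OF W] by auto
  then obtain V where V: "openin A V" "r w \<in> V" and fin: "finite {j\<in>J. \<exists>y\<in>V. f j y \<noteq> 0}"
    using lf unfolding locally_finite_family_def by blast
  define G where "G = {j\<in>J. \<exists>y\<in>V. f j y \<noteq> 0}"
  have meets: "j \<in> G" if "j \<in> J" "a \<in> C j" "a \<in> V" for j a
    using that V(1) unfolding C_def G_def in_closure_of by blast
  define V0 where "V0 = V - (\<Union>j\<in>{j\<in>G. r w \<notin> C j}. C j)"
  have "openin A V0"
  proof -
    have "finite {j\<in>G. r w \<notin> C j}"
      using fin unfolding G_def by (rule rev_finite_subset) blast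
    then show ?thesis
      unfolding V0_def C_def by (intro openin_diff V(1) closedin_Union) auto
  qed
  then have "openin (subtopology X W) {y\<in>topspace (subtopology X W). r y \<in> V0}"
    by (rule openin_continuous_map_preimage[OF r])
  then have "openin X {y\<in>topspace (subtopology X W). r y \<in> V0}"
    using W openin_trans_full by blast
  moreover have "openin X ((\<Inter>j\<in>{j\<in>G. r w \<in> C j}. U j \<inter> topspace X) \<inter> topspace X)"
  proof (intro openin_INT)
    show "finite {j\<in>G. r w \<in> C j}"
      using fin unfolding G_def by (rule rev_finite_subset) blast
  qed (use U in \<open>auto simp: G_def\<close>)
  ultimately have "openin X ({y\<in>topspace (subtopology X W). r y \<in> V0}
                     \<inter> ((\<Inter>j\<in>{j\<in>G. r w \<in> C j}. U j \<inter> topspace X) \<inter> topspace X))"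
    (is "openin X ?N") by (rule openin_Int)
  moreover have "w \<in> ?N"
    using w V(2) openin_subset[OF W] by (auto simp: V0_def C_def G_def)
  moreover have "?N \<subseteq> ?W'"
  proof
    fix y assume y: "y \<in> ?N"
    have "y \<in> U j" if j: "j \<in> J" "r y \<in> C j" for j
    proof -
      have rV0: "r y \<in> V0" using y by simp
      then have "j \<in> G"
        using meets[OF j] by (simp add: V0_def)
      moreover have "r w \<in> C j"
        using rV0 \<open>j \<in> G\<close> j(2) by (auto simp: V0_def)
      ultimately show "y \<in> U j" using y by blast
    qed
    then show "y \<in> ?W'"
      using y by (simp add: C_def)
  qed
  ultimately show "\<exists>T. openin X T \<and> w \<in> T \<and> T \<subseteq> ?W'"
    by blast
qed

definition damped_pullback :: "'a set \<Rightarrow> ('a \<Rightarrow> real) \<Rightarrow> ('a \<Rightarrow> 'b) \<Rightarrow> ('j \<Rightarrow> 'b \<Rightarrow> real) \<Rightarrow> 'j \<Rightarrow> 'a \<Rightarrow> real"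
  where "damped_pullback W l r f j x = (if x \<in> W then l x * f j (r x) else 0)"

context
  fixes X :: "'a topology" and W :: "'a set" and A :: "'b topology" and r :: "'a \<Rightarrow> 'b"
    and J :: "'j set" and f :: "'j \<Rightarrow> 'b \<Rightarrow> real" and l :: "'a \<Rightarrow> real"
  assumes W: "openin X W" and r: "continuous_map (subtopology X W) A r"
    and f: "indexed_partition_of_unity A J f"
    and l: "continuous_map X euclideanreal l" "\<And>x. x \<in> topspace X \<Longrightarrow> 0 \<le> l x"
    and K: "X closure_of {x\<in>topspace X. l x \<noteq> 0} \<subseteq> W"
begin

lemma retraction_in_topspace: "x \<in> W \<Longrightarrow> r x \<in> topspace A"
  using continuous_map_image_subset_topspace[OF r] openin_subset[OF W] by auto

lemma damped_pullback_vanishes_near_outside: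
  assumes "x \<in> topspace X" "x \<notin> W"
  obtains N where "openin X N" "x \<in> N" "\<And>y. y \<in> N \<Longrightarrow> l y = 0"
    "\<And>j y. y \<in> N \<Longrightarrow> damped_pullback W l r f j y = 0"
proof
  let ?K = "X closure_of {x\<in>topspace X. l x \<noteq> 0}"
  show "openin X (topspace X - ?K)" "x \<in> topspace X - ?K"
    using assms K by auto
  show l0: "l y = 0" if "y \<in> topspace X - ?K" for y
    using that closure_of_subset[of "{x\<in>topspace X. l x \<noteq> 0}" X] by auto
  show "damped_pullback W l r f j y = 0" if "y \<in> topspace X - ?K" for j y
    using l0[OF that] by (simp add: damped_pullback_def)
qed

lemma continuous_map_damped_pullback:
  assumes j: "j \<in> J"
  shows "continuous_map X euclideanreal (damped_pullback W l r f j)"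
proof (rule continuous_map_locally)
  fix x assume x: "x \<in> topspace X"
  show "\<exists>V. openin X V \<and> x \<in> V \<and> continuous_map (subtopology X V) euclideanreal (damped_pullback W l r f j)"
  proof (cases "x \<in> W")
    case True
    have "continuous_map (subtopology X W) euclideanreal (\<lambda>y. f j (r y))"
      using continuous_map_compose[OF r indexed_partition_of_unity_imp_continuous[OF f j]]
      by (simp add: o_def)
    then have "continuous_map (subtopology X W) euclideanreal (\<lambda>y. l y * f j (r y))"
      by (rule continuous_map_real_mult[OF continuous_map_from_subtopology[OF l(1)]])
    then have "continuous_map (subtopology X W) euclideanreal (damped_pullback W l r f j)"
      by (rule continuous_map_eq) (simp add: damped_pullback_def)
    then show ?thesis using W True by blast
  next
    case False
    then obtain N where N: "openin X N" "x \<in> N" "\<And>y. y \<in> N \<Longrightarrow> damped_pullback W l r f j y = 0"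
      using damped_pullback_vanishes_near_outside[OF x] by metis
    have "continuous_map (subtopology X N) euclideanreal (damped_pullback W l r f j)"
      by (rule continuous_map_eq[of _ _ "\<lambda>x. 0"]) (use N(3) in auto)
    then show ?thesis using N(1,2) by blast
  qed
qed

lemma damped_pullback_nonneg: "j \<in> J \<Longrightarrow> x \<in> topspace X \<Longrightarrow> 0 \<le> damped_pullback W l r f j x"
  using l(2) indexed_partition_of_unity_imp_nonneg[OF f _ retraction_in_topspace]
  by (simp add: damped_pullback_def)

lemma locally_finite_damped_pullback: "locally_finite_family X J (damped_pullback W l r f)"
  unfolding locally_finite_family_def
proof
  fix x assume x: "x \<in> topspace X"
  show "\<exists>N. openin X N \<and> x \<in> N \<and> finite {j\<in>J. \<exists>y\<in>N. damped_pullback W l r f j y \<noteq> 0}"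
  proof (cases "x \<in> W")
    case True
    obtain V where V: "openin A V" "r x \<in> V" and fin: "finite {j\<in>J. \<exists>y\<in>V. f j y \<noteq> 0}"
      using indexed_partition_of_unity_imp_locally_finite[OF f] retraction_in_topspace[OF True]
      unfolding locally_finite_family_def by blast
    define N where "N = {y\<in>topspace (subtopology X W). r y \<in> V}"
    have "openin (subtopology X W) N"
      unfolding N_def by (rule openin_continuous_map_preimage[OF r V(1)])
    then have "openin X N" using W openin_trans_full by blast
    moreover have "x \<in> N" using x True V(2) by (simp add: N_def)
    moreover have "{j\<in>J. \<exists>y\<in>N. damped_pullback W l r f j y \<noteq> 0} \<subseteq> {j\<in>J. \<exists>y\<in>V. f j y \<noteq> 0}"
      by (auto simp: N_def damped_pullback_def split: if_splits)
    ultimately show ?thesis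
      using fin finite_subset by blast
  next
    case False
    then obtain N where "openin X N" "x \<in> N" "\<And>j y. y \<in> N \<Longrightarrow> damped_pullback W l r f j y = 0"
      using damped_pullback_vanishes_near_outside[OF x] by metis
    then show ?thesis by (intro exI[of _ N]) auto
  qed
qed

lemma sum_damped_pullback:
  assumes x: "x \<in> topspace X"
  shows "(\<Sum>j\<in>{j\<in>J. damped_pullback W l r f j x \<noteq> 0}. damped_pullback W l r f j x) = l x"
proof (cases "x \<in> W \<and> l x \<noteq> 0")
  case True
  then have "{j\<in>J. damped_pullback W l r f j x \<noteq> 0} = {j\<in>J. f j (r x) \<noteq> 0}"
    by (auto simp: damped_pullback_def)
  then show ?thesis
    using True indexed_partition_of_unity_imp_sum_eq_1[OF f retraction_in_topspace]
    by (simp add: damped_pullback_def sum_distrib_left[symmetric])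
next
  case False
  then have "l x = 0"
    using damped_pullback_vanishes_near_outside[OF x] by metis
  then show ?thesis by (simp add: damped_pullback_def)
qed

lemma closure_of_damped_pullback_support:
  "X closure_of {x\<in>topspace X. damped_pullback W l r f j x \<noteq> 0}
     \<subseteq> {x\<in>W. r x \<in> A closure_of {a\<in>topspace A. f j a \<noteq> 0}}"
proof -
  let ?K = "X closure_of {x\<in>topspace X. l x \<noteq> 0}"
  define D where "D = {x\<in>topspace (subtopology X W). r x \<in> A closure_of {a\<in>topspace A. f j a \<noteq> 0}}"
  have "closedin (subtopology X W) D"
    unfolding D_def by (rule closedin_continuous_map_preimage[OF r]) simp
  then obtain T where T: "closedin X T" "D = T \<inter> W"
    by (auto simp: closedin_subtopology)
  have "{x\<in>topspace X. damped_pullback W l r f j x \<noteq> 0} \<subseteq> ?K \<inter> T"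
  proof
    fix x assume "x \<in> {x\<in>topspace X. damped_pullback W l r f j x \<noteq> 0}"
    then have x: "x \<in> topspace X" "x \<in> W" "l x \<noteq> 0" "f j (r x) \<noteq> 0"
      by (auto simp: damped_pullback_def split: if_splits)
    then have "x \<in> ?K"
      using closure_of_subset[of "{x\<in>topspace X. l x \<noteq> 0}" X] by auto
    moreover have "r x \<in> A closure_of {a\<in>topspace A. f j a \<noteq> 0}"
      using closure_of_subset[of "{a\<in>topspace A. f j a \<noteq> 0}" A] retraction_in_topspace[OF x(2)] x(4)
      by blast
    ultimately show "x \<in> ?K \<inter> T"
      using x T(2) by (auto simp: D_def)
  qed
  then have "X closure_of {x\<in>topspace X. damped_pullback W l r f j x \<noteq> 0} \<subseteq> ?K \<inter> T"
    using T(1) by (intro closure_of_minimal) auto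
  also have "\<dots> \<subseteq> {x\<in>W. r x \<in> A closure_of {a\<in>topspace A. f j a \<noteq> 0}}"
    using K T(2) openin_subset[OF W] by (auto simp: D_def)
  finally show ?thesis .
qed

end

lemma paracompact_space_extend_partition_of_unity:
  assumes para: "paracompact_space X" and A: "closedin X A" and nr: "neighbourhood_retract A X"
    and f: "indexed_partition_of_unity (subtopology X A) J f"
      "subordinate_family (subtopology X A) J f U"
    and U: "\<And>j. j \<in> J \<Longrightarrow> openin X (U j \<inter> topspace X)" and cov: "topspace X \<subseteq> (\<Union>j\<in>J. U j)"
  obtains h where "indexed_partition_of_unity X J h" "subordinate_family X J h U"
    "\<And>j x. j \<in> J \<Longrightarrow> x \<in> A \<Longrightarrow> h j x = f j x"
proof -
  let ?XA = "subtopology X A"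
  let ?C = "\<lambda>j. ?XA closure_of {a\<in>topspace ?XA. f j a \<noteq> 0}"
  obtain W where W: "openin X W" "A \<subseteq> W" "A retract_of_space subtopology X W"
    using nr unfolding neighbourhood_retract_def by blast
  moreover have "subtopology (subtopology X W) A = ?XA"
    using W(2) by (simp add: subtopology_subtopology Int_absorb1)
  ultimately obtain r where r: "continuous_map (subtopology X W) ?XA r"
    and rid: "\<And>x. x \<in> A \<Longrightarrow> r x = x"
    unfolding retract_of_space_def by auto
  define W' where "W' = {w\<in>W. \<forall>j\<in>J. r w \<in> ?C j \<longrightarrow> w \<in> U j}"
  have W': "openin X W'"
    unfolding W'_def using W(1) r indexed_partition_of_unity_imp_locally_finite[OF f(1)] U
    by (rule openin_retraction_respects_supports)
  have "W' \<subseteq> W" by (auto simp: W'_def)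
  then have r': "continuous_map (subtopology X W') ?XA r"
    using r continuous_map_from_subtopology_mono by blast
  have "A \<subseteq> W'"
    using W(2) rid f(2) by (force simp: W'_def subordinate_family_def)
  then obtain l where l: "continuous_map X euclideanreal l"
    "\<And>x. x \<in> topspace X \<Longrightarrow> 0 \<le> l x \<and> l x \<le> 1" "\<And>x. x \<in> A \<Longrightarrow> l x = 1"
    "X closure_of {x\<in>topspace X. l x \<noteq> 0} \<subseteq> W'"
    using paracompact_space_cutoff[OF para A W'] by blast
  obtain e where e: "indexed_partition_of_unity X J e" "subordinate_family X J e U"
    using paracompact_space_imp_indexed_partition_of_unity[OF para U cov] by blast
  have "0 \<le> l x" if "x \<in> topspace X" for x
    using l(2)[OF that] by simp
  note pullback = W' r' f(1) l(1) this l(4)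
  define h where "h j x = damped_pullback W' l r f j x + (1 - l x) * e j x" for j x
  show thesis
  proof
    show "indexed_partition_of_unity X J h"
      unfolding h_def
      by (rule indexed_partition_of_unity_blend[OF continuous_map_damped_pullback[OF pullback]
            damped_pullback_nonneg[OF pullback] locally_finite_damped_pullback[OF pullback]
            sum_damped_pullback[OF pullback] l(1) _ e(1)])
         (use l(2) in auto)
    show "subordinate_family X J h U"
      unfolding subordinate_family_def
    proof
      fix j assume j: "j \<in> J"
      have "X closure_of {x\<in>topspace X. h j x \<noteq> 0}
              \<subseteq> X closure_of {x\<in>topspace X. damped_pullback W' l r f j x \<noteq> 0}
                  \<union> X closure_of {x\<in>topspace X. e j x \<noteq> 0}"
        unfolding closure_of_Un[symmetric] by (rule closure_of_mono) (auto simp: h_def)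
      also have "\<dots> \<subseteq> U j"
        using closure_of_damped_pullback_support[OF pullback, of j] e(2) j
        by (auto simp: W'_def subordinate_family_def)
      finally show "X closure_of {x\<in>topspace X. h j x \<noteq> 0} \<subseteq> U j" .
    qed
    show "h j x = f j x" if "j \<in> J" "x \<in> A" for j x
      using that \<open>A \<subseteq> W'\<close> rid l(3) by (auto simp: h_def damped_pullback_def)
  qed
qed

section \<open>Sequential colimits\<close>

lemma sequential_colimit_mono:
  assumes "is_sequential_colimit Y S" "m \<le> n"
  shows "S m \<subseteq> S n"
  using assms lift_Suc_mono_le[of S] unfolding is_sequential_colimit_def by blast

lemma continuous_map_sequential_colimit:
  assumes Y: "is_sequential_colimit Y S"
    and f: "\<And>n. continuous_map (subtopology Y (S n)) Z f"
  shows "continuous_map Y Z f"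
  unfolding continuous_map_def
proof (intro conjI allI impI)
  have tY: "topspace Y = (\<Union>n. S n)"
    using Y by (simp add: is_sequential_colimit_def)
  show "f \<in> topspace Y \<rightarrow> topspace Z"
    using f continuous_map_image_subset_topspace tY by fastforce
  have colim: "\<And>U. U \<subseteq> topspace Y \<Longrightarrow> (\<And>n. openin (subtopology Y (S n)) (U \<inter> S n)) \<Longrightarrow> openin Y U"
    using Y unfolding is_sequential_colimit_def by blast
  fix V assume V: "openin Z V"
  show "openin Y {x \<in> topspace Y. f x \<in> V}"
  proof (rule colim)
    fix n
    have "{x \<in> topspace Y. f x \<in> V} \<inter> S n = {x \<in> topspace (subtopology Y (S n)). f x \<in> V}"
      using tY by auto
    then show "openin (subtopology Y (S n)) ({x \<in> topspace Y. f x \<in> V} \<inter> S n)"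
      using openin_continuous_map_preimage[OF f V] by simp
  qed blast
qed

definition glue_sequence :: "(nat \<Rightarrow> 'a set) \<Rightarrow> (nat \<Rightarrow> 'j \<Rightarrow> 'a \<Rightarrow> 'b) \<Rightarrow> 'j \<Rightarrow> 'a \<Rightarrow> 'b" where
  "glue_sequence S f j x = f (LEAST n. x \<in> S n) j x"

lemma glue_sequence_eq:
  assumes mono: "\<And>m n. m \<le> n \<Longrightarrow> S m \<subseteq> S n"
    and ext: "\<And>n j x. j \<in> J \<Longrightarrow> x \<in> S n \<Longrightarrow> f (Suc n) j x = f n j x"
    and j: "j \<in> J" and x: "x \<in> S n"
  shows "glue_sequence S f j x = f n j x"
proof -
  have "f n j x = f m j x" if "m \<le> n" "x \<in> S m" for m n
    using that(1)
  proof (induction n rule: dec_induct)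
    case (step n)
    then show ?case using ext[OF j] mono[of m n] that(2) by auto
  qed simp
  moreover have "(LEAST n. x \<in> S n) \<le> n" "x \<in> S (LEAST n. x \<in> S n)"
    using x by (auto intro: Least_le LeastI)
  ultimately show ?thesis
    unfolding glue_sequence_def by metis
qed

lemma sequential_colimit_glue_partitions:
  assumes Y: "is_sequential_colimit Y S"
    and f: "\<And>n. indexed_partition_of_unity (subtopology Y (S n)) J (f n)"
      "\<And>n. subordinate_family (subtopology Y (S n)) J (f n) U"
    and ext: "\<And>n j x. j \<in> J \<Longrightarrow> x \<in> S n \<Longrightarrow> f (Suc n) j x = f n j x"
  obtains h where "indexed_partition_of_unity Y J h" "subordinate_family Y J h U"
proof -
  have tY: "topspace Y = (\<Union>n. S n)"
    using Y by (simp add: is_sequential_colimit_def)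
  have tS: "topspace (subtopology Y (S n)) = S n" for n
    using tY by auto
  have inS: "\<exists>n. x \<in> S n" if "x \<in> topspace Y" for x
    using that tY by simp
  define t where "t = glue_sequence S f"
  have t: "t j x = f n j x" if "j \<in> J" "x \<in> S n" for j x n
    unfolding t_def by (rule glue_sequence_eq[where J=J and S=S and f=f, OF sequential_colimit_mono[OF Y] ext that])
  have "point_finite_partition_of_unity Y J t"
    unfolding point_finite_partition_of_unity_def
  proof (intro conjI ballI)
    fix j assume j: "j \<in> J"
    show "continuous_map Y euclideanreal (t j)"
    proof (rule continuous_map_sequential_colimit[OF Y])
      show "continuous_map (subtopology Y (S n)) euclideanreal (t j)" for n
        using indexed_partition_of_unity_imp_continuous[OF f(1) j]
        by (rule continuous_map_eq) (use t[OF j] tS in auto)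
    qed
    show "0 \<le> t j x" if x: "x \<in> topspace Y" for x
    proof -
      obtain n where "x \<in> S n" using inS[OF x] ..
      then show ?thesis
        using indexed_partition_of_unity_imp_nonneg[OF f(1)[of n] j] t[OF j] tS x by simp
    qed
  next
    fix x assume x: "x \<in> topspace Y"
    then obtain n where n: "x \<in> S n" using inS by blast
    then have xn: "x \<in> topspace (subtopology Y (S n))" using x by simp
    have eq: "{j\<in>J. t j x \<noteq> 0} = {j\<in>J. f n j x \<noteq> 0}"
      using t n by auto
    show "finite {j\<in>J. t j x \<noteq> 0}"
      unfolding eq using indexed_partition_of_unity_imp_locally_finite[OF f(1)] xn
      by (rule locally_finite_family_imp_finite)
    show "(\<Sum>j\<in>{j\<in>J. t j x \<noteq> 0}. t j x) = 1"
      unfolding eq using indexed_partition_of_unity_imp_sum_eq_1[OF f(1) xn] t n by simp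
  qed
  moreover have "x \<in> U j" if j: "j \<in> J" and x: "x \<in> topspace Y" and nz: "t j x \<noteq> 0" for j x
  proof -
    obtain n where n: "x \<in> S n" using inS[OF x] ..
    then have "x \<in> subtopology Y (S n) closure_of {y\<in>topspace (subtopology Y (S n)). f n j y \<noteq> 0}"
      using closure_of_subset[of "{y\<in>S n. f n j y \<noteq> 0}" "subtopology Y (S n)"] nz t[OF j] tS by auto
    then show ?thesis
      using f(2) j by (auto simp: subordinate_family_def)
  qed
  ultimately show thesis
    using point_finite_partition_imp_indexed_partition_of_unity that by blast
qed

lemma sequential_colimit_compatible_partitions:
  assumes Y: "is_sequential_colimit Y S"
    and para: "\<And>n. paracompact_space (subtopology Y (S n))"
    and closed: "\<And>n. closedin Y (S n)"
    and retract: "\<And>n. neighbourhood_retract (S n) (subtopology Y (S (Suc n)))"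
    and U: "\<And>j. j \<in> J \<Longrightarrow> openin Y (U j)" and cov: "topspace Y \<subseteq> (\<Union>j\<in>J. U j)"
  obtains f where
    "\<And>n. indexed_partition_of_unity (subtopology Y (S n)) J (f n)"
    "\<And>n. subordinate_family (subtopology Y (S n)) J (f n) U"
    "\<And>n j x. j \<in> J \<Longrightarrow> x \<in> S n \<Longrightarrow> f (Suc n) j x = f n j x"
proof -
  let ?Y = "\<lambda>n. subtopology Y (S n)"
  have open_n: "openin (?Y n) (U j \<inter> topspace (?Y n))" if "j \<in> J" for j n
  proof -
    have "U j \<inter> topspace (?Y n) = U j \<inter> S n"
      using openin_subset[OF U[OF that]] by auto
    then show ?thesis
      using U[OF that] by (simp add: openin_subtopology_Int)
  qed
  have cover_n: "topspace (?Y n) \<subseteq> (\<Union>j\<in>J. U j)" for n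
    using cov by auto
  define P where "P n f \<longleftrightarrow> indexed_partition_of_unity (?Y n) J f \<and> subordinate_family (?Y n) J f U"
    for n f
  have "\<exists>f. \<forall>n. P n (f n) \<and> (\<forall>j\<in>J. \<forall>x\<in>S n. f (Suc n) j x = f n j x)"
  proof (rule dependent_nat_choice)
    show "\<exists>f. P 0 f"
      using paracompact_space_imp_indexed_partition_of_unity[OF para open_n cover_n]
      unfolding P_def by blast
  next
    fix f n assume "P n f"
    have "S n \<subseteq> S (Suc n)"
      using sequential_colimit_mono[OF Y] by simp
    then have "closedin (?Y (Suc n)) (S n)" "subtopology (?Y (Suc n)) (S n) = ?Y n"
      using closed[of n] by (auto simp: closedin_subtopology subtopology_subtopology Int_absorb1)
    then show "\<exists>g. P (Suc n) g \<and> (\<forall>j\<in>J. \<forall>x\<in>S n. g j x = f j x)"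
      using paracompact_space_extend_partition_of_unity[OF para _ retract _ _ open_n cover_n]
        \<open>P n f\<close> unfolding P_def by metis
  qed
  then show thesis
    using that unfolding P_def by blast
qed

theorem lemmaA4:
  fixes Y :: "'a topology" and S :: "nat \<Rightarrow> 'a set"
  assumes "is_sequential_colimit Y S"
    and "\<And>n. paracompact_space (subtopology Y (S n))"
    and "\<And>n. closedin Y (S n)"
    and "\<And>n. neighbourhood_retract (S n) (subtopology Y (S (Suc n)))"
    and "\<And>n. paracompact_space (subtopology Y (S (Suc n) - S n))"
    and "\<And>n. Hausdorff_space (subtopology Y (S (Suc n) - S n))"
  shows "paracompact_space Y"
  unfolding paracompact_space_def
proof (intro allI impI)
  fix \<U> assume \<U>: "(\<forall>U\<in>\<U>. openin Y U) \<and> \<Union>\<U> = topspace Y"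
  then obtain f where
    "\<And>n. indexed_partition_of_unity (subtopology Y (S n)) \<U> (f n)"
    "\<And>n. subordinate_family (subtopology Y (S n)) \<U> (f n) (\<lambda>U. U)"
    "\<And>n U x. U \<in> \<U> \<Longrightarrow> x \<in> S n \<Longrightarrow> f (Suc n) U x = f n U x"
    using sequential_colimit_compatible_partitions[OF assms(1-4), of \<U> "\<lambda>U. U"] by auto
  then obtain h where "indexed_partition_of_unity Y \<U> h" "subordinate_family Y \<U> h (\<lambda>U. U)"
    using sequential_colimit_glue_partitions[OF assms(1)] by metis
  then show "\<exists>F. locally_finite_partition_of_unity Y F \<and> subordinate_to Y F \<U>"
    by (rule indexed_partition_of_unity_imp_locally_finite_partition_of_unity) simp
qed

end
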